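(* For every finite tree $T$, the dominating ideal $DI(T)$ is normally torsion-free.
   Context: For a simple graph $G$, $N_G[i]=\{j:\{i,j\}\in E(G)\}\cup\{i\}$. A set $S\subseteq V(G)$ is a dominating set if $S\cap N_G[v]\ne\emptyset$ for all $v\in V(G)$; it is minimal if it contains no other dominating set properly. With a variable $x_j$ per vertex in a polynomial ring over a field $K$, $DI(G)=(\prod_{i\in S}x_i : S \text{ a minimal dominating set of } G)$. An ideal $I$ is normally torsion-free if $\mathrm{Ass}(R/I^k)\subseteq\mathrm{Ass}(R/I)$ for all $k\ge1$. *)

theory Defs
  imports Main "HOL-Library.Poly_Mapping"
begin

text \<open>A simple graph has vertex set UNIV of the (finite) type 'v and a
symmetric, irreflexive adjacency relation E.\<close>

definition simple_graph :: "('v \<Rightarrow> 'v \<Rightarrow> bool) \<Rightarrow> bool" where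
  "simple_graph E \<longleftrightarrow> (\<forall>u v. E u v \<longrightarrow> E v u) \<and> (\<forall>v. \<not> E v v)"

definition connected_graph :: "('v \<Rightarrow> 'v \<Rightarrow> bool) \<Rightarrow> bool" where
  "connected_graph E \<longleftrightarrow> (\<forall>u v. E\<^sup>*\<^sup>* u v)"

definition is_cycle :: "('v \<Rightarrow> 'v \<Rightarrow> bool) \<Rightarrow> 'v list \<Rightarrow> bool" where
  "is_cycle E cs \<longleftrightarrow> length cs \<ge> 3 \<and> distinct cs
     \<and> (\<forall>i. Suc i < length cs \<longrightarrow> E (cs ! i) (cs ! Suc i))
     \<and> E (last cs) (hd cs)"

definition acyclic_graph :: "('v \<Rightarrow> 'v \<Rightarrow> bool) \<Rightarrow> bool" where
  "acyclic_graph E \<longleftrightarrow> \<not> (\<exists>cs. is_cycle E cs)"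

definition is_tree :: "('v \<Rightarrow> 'v \<Rightarrow> bool) \<Rightarrow> bool" where
  "is_tree E \<longleftrightarrow> simple_graph E \<and> connected_graph E \<and> acyclic_graph E"

definition closed_nbhd :: "('v \<Rightarrow> 'v \<Rightarrow> bool) \<Rightarrow> 'v \<Rightarrow> 'v set" where
  "closed_nbhd E i = {j. E i j} \<union> {i}"

definition dominating_set :: "('v \<Rightarrow> 'v \<Rightarrow> bool) \<Rightarrow> 'v set \<Rightarrow> bool" where
  "dominating_set E S \<longleftrightarrow> (\<forall>v. S \<inter> closed_nbhd E v \<noteq> {})"

definition minimal_dominating_set :: "('v \<Rightarrow> 'v \<Rightarrow> bool) \<Rightarrow> 'v set \<Rightarrow> bool" where
  "minimal_dominating_set E S \<longleftrightarrow> dominating_set E S \<and> (\<forall>S'. S' \<subset> S \<longrightarrow> \<not> dominating_set E S')"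

definition is_ideal :: "'a::comm_ring_1 set \<Rightarrow> bool" where
  "is_ideal I \<longleftrightarrow> 0 \<in> I \<and> (\<forall>a\<in>I. \<forall>b\<in>I. a + b \<in> I) \<and> (\<forall>r. \<forall>a\<in>I. r * a \<in> I)"

definition ideal_gen :: "'a::comm_ring_1 set \<Rightarrow> 'a set" where
  "ideal_gen G = \<Inter>{I. is_ideal I \<and> G \<subseteq> I}"

definition ideal_pow :: "'a::comm_ring_1 set \<Rightarrow> nat \<Rightarrow> 'a set" where
  "ideal_pow I k = ideal_gen {\<Prod>i<k. f i | f. \<forall>i<k. f i \<in> I}"

definition prime_ideal :: "'a::comm_ring_1 set \<Rightarrow> bool" where
  "prime_ideal P \<longleftrightarrow> is_ideal P \<and> P \<noteq> UNIV \<and> (\<forall>a b. a * b \<in> P \<longrightarrow> a \<in> P \<or> b \<in> P)"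

text \<open>Associated primes of R/I: primes of the form (I : f) = Ann(f + I).\<close>
definition Ass :: "'a::comm_ring_1 set \<Rightarrow> 'a set set" where
  "Ass I = {P. prime_ideal P \<and> (\<exists>f. P = {g. g * f \<in> I})}"

definition normally_torsion_free :: "'a::comm_ring_1 set \<Rightarrow> bool" where
  "normally_torsion_free I \<longleftrightarrow> (\<forall>k\<ge>1. Ass (ideal_pow I k) \<subseteq> Ass I)"

text \<open>Polynomials in variables indexed by 'v with coefficients in 'k:
finitely supported maps from monomials (exponent vectors) to coefficients.\<close>
type_synonym ('v, 'k) mpoly = "('v \<Rightarrow>\<^sub>0 nat) \<Rightarrow>\<^sub>0 'k"

definition var :: "'v \<Rightarrow> ('v, 'k::comm_ring_1) mpoly" where
  "var v = Poly_Mapping.single (Poly_Mapping.single v 1) 1"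

definition dominating_ideal :: "('v \<Rightarrow> 'v \<Rightarrow> bool) \<Rightarrow> ('v, 'k::field) mpoly set" where
  "dominating_ideal E = ideal_gen {\<Prod>i\<in>S. var i | S. minimal_dominating_set E S}"

end

theory Submission
  imports Defs
begin

text \<open>Write \<open>P(S)\<close> for the prime ideal generated by the variables \<open>x\<^sub>v\<close>, \<open>v \<in> S\<close>. A squarefree
  monomial lies in every \<open>P(N[v])\<close> exactly when its support is dominating, so \<open>DI(G)\<close> is the
  cover ideal of the closed neighbourhood hypergraph, with \<open>k\<close>-th symbolic power
  \<open>\<Inter>\<^sub>v P(N[v])\<^sup>k\<close>.

  For a forest this symbolic power equals \<open>DI(G)\<^sup>k\<close>: a monomial of degree at least \<open>k\<close> on
  every \<open>N[v]\<close> is divisible by a product of \<open>k\<close> minimal dominating sets. These arise as the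
  colour classes of an assignment of colour sets to the vertices under which every closed
  neighbourhood sees all \<open>k\<close> colours; it is built by removing a leaf, colouring the rest
  with a relaxed demand at the leaf's neighbour, and extending greedily.

  Since \<open>P(S)\<^sup>k\<close> is \<open>P(S)\<close>-primary, every associated prime of \<open>\<Inter>\<^sub>v P(N[v])\<^sup>k\<close> is one of
  the minimal \<open>P(N[v])\<close>, and each of these is associated to \<open>DI(G)\<close> already.\<close>

lemma is_ideal_ideal_gen: "is_ideal (ideal_gen G)"
  unfolding ideal_gen_def is_ideal_def by auto

lemma ideal_gen_subset: "G \<subseteq> ideal_gen G"
  unfolding ideal_gen_def by auto

lemma ideal_gen_least: "is_ideal I \<Longrightarrow> G \<subseteq> I \<Longrightarrow> ideal_gen G \<subseteq> I"
  unfolding ideal_gen_def by auto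

lemma ideal_zero: "is_ideal I \<Longrightarrow> 0 \<in> I"
  unfolding is_ideal_def by auto

lemma ideal_add: "is_ideal I \<Longrightarrow> a \<in> I \<Longrightarrow> b \<in> I \<Longrightarrow> a + b \<in> I"
  unfolding is_ideal_def by auto

lemma ideal_mult_left: "is_ideal I \<Longrightarrow> a \<in> I \<Longrightarrow> r * a \<in> I"
  unfolding is_ideal_def by auto

lemma ideal_mult_right: "is_ideal I \<Longrightarrow> a \<in> I \<Longrightarrow> a * r \<in> I"
  using ideal_mult_left[of I a r] by (simp add: mult.commute)

lemma ideal_sum: "is_ideal I \<Longrightarrow> (\<And>x. x \<in> A \<Longrightarrow> f x \<in> I) \<Longrightarrow> sum f A \<in> I"
  by (induction A rule: infinite_finite_induct) (auto simp: ideal_zero ideal_add)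

lemma is_ideal_ideal_pow: "is_ideal (ideal_pow I k)"
  unfolding ideal_pow_def by (rule is_ideal_ideal_gen)

lemma prod_in_ideal_pow: "(\<And>i. i < k \<Longrightarrow> f i \<in> I) \<Longrightarrow> (\<Prod>i<k. f i) \<in> ideal_pow I k"
  unfolding ideal_pow_def by (rule subsetD[OF ideal_gen_subset]) blast

lemma ideal_pow_subset:
  assumes "is_ideal J" and "\<And>f. \<forall>i<k. f i \<in> I \<Longrightarrow> (\<Prod>i<k. f i) \<in> J"
  shows "ideal_pow I k \<subseteq> J"
  unfolding ideal_pow_def using assms by (intro ideal_gen_least) auto

lemma ideal_pow_one:
  assumes "is_ideal I" shows "ideal_pow I 1 = I"
proof
  show "ideal_pow I 1 \<subseteq> I"
    by (rule ideal_pow_subset[OF assms]) simp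
  show "I \<subseteq> ideal_pow I 1"
    using prod_in_ideal_pow[of 1 "\<lambda>_. _" I] by auto
qed

lemma prime_ideal_prod_notin:
  assumes "prime_ideal P" and "\<And>j. j \<in> J \<Longrightarrow> x j \<notin> P"
  shows "(\<Prod>j\<in>J. x j) \<notin> P"
proof -
  have "1 \<notin> P"
    using assms(1) ideal_mult_left[of P 1] unfolding prime_ideal_def by auto
  then show ?thesis
    using assms by (induction J rule: infinite_finite_induct) (auto simp: prime_ideal_def)
qed

lemma prime_ideal_power_notin: "prime_ideal P \<Longrightarrow> x \<notin> P \<Longrightarrow> x ^ k \<notin> P"
  using prime_ideal_prod_notin[of P "{..<k}" "\<lambda>_. x"] by simp

section \<open>Monomials and degree ideals\<close>

definition monom :: "('v \<Rightarrow>\<^sub>0 nat) \<Rightarrow> ('v, 'k::comm_ring_1) mpoly" where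
  "monom m = Poly_Mapping.single m 1"

lemma monom_mult: "monom a * monom b = monom (a + b)"
  by (simp add: monom_def mult_single)

lemma monom_zero: "monom 0 = 1"
  by (simp add: monom_def)

lemma var_eq_monom: "var v = monom (Poly_Mapping.single v 1)"
  by (simp add: var_def monom_def)

lemma keys_monom [simp]: "Poly_Mapping.keys (monom m :: ('v, 'k::comm_ring_1) mpoly) = {m}"
  by (simp add: monom_def)

lemma monom_eq_mult_monom_diff:
  assumes "\<And>u. Poly_Mapping.lookup s u \<le> Poly_Mapping.lookup m u"
  shows "monom m = monom (m - s) * monom s"
proof -
  have "m = (m - s) + s"
    by (rule poly_mapping_eqI) (use assms in \<open>simp add: lookup_add lookup_minus\<close>)
  then show ?thesis by (simp add: monom_mult)
qed

lemma const_mult_monom: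
  "Poly_Mapping.single 0 c * (monom m :: ('v, 'k::comm_ring_1) mpoly) = Poly_Mapping.single m c"
  by (simp add: monom_def mult_single)

lemma poly_eq_sum_terms:
  "p = (\<Sum>m\<in>Poly_Mapping.keys p. Poly_Mapping.single m (Poly_Mapping.lookup p m))"
proof (rule poly_mapping_eqI)
  fix x
  have "Poly_Mapping.lookup (\<Sum>m\<in>Poly_Mapping.keys p. Poly_Mapping.single m (Poly_Mapping.lookup p m)) x
      = (\<Sum>m\<in>Poly_Mapping.keys p. if m = x then Poly_Mapping.lookup p m else 0)"
    by (simp add: lookup_sum lookup_single when_def)
  also have "\<dots> = Poly_Mapping.lookup p x"
    by (simp add: sum.delta in_keys_iff)
  finally show "Poly_Mapping.lookup p x =
      Poly_Mapping.lookup (\<Sum>m\<in>Poly_Mapping.keys p. Poly_Mapping.single m (Poly_Mapping.lookup p m)) x"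
    by simp
qed

definition monomial_span :: "('v \<Rightarrow>\<^sub>0 nat) set \<Rightarrow> ('v, 'k::comm_ring_1) mpoly set" where
  "monomial_span T = {p. Poly_Mapping.keys p \<subseteq> T}"

lemma is_ideal_monomial_span:
  fixes T :: "('v \<Rightarrow>\<^sub>0 nat) set"
  assumes up_closed: "\<And>a b. a \<in> T \<Longrightarrow> a + b \<in> T"
  shows "is_ideal (monomial_span T :: ('v, 'k::comm_ring_1) mpoly set)"
proof -
  have "Poly_Mapping.keys (r * a) \<subseteq> T" if "Poly_Mapping.keys a \<subseteq> T" for r a :: "('v, 'k) mpoly"
  proof
    fix x assume "x \<in> Poly_Mapping.keys (r * a)"
    then obtain c d where "x = c + d" "d \<in> Poly_Mapping.keys a"
      using keys_mult[of r a] by blast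
    then show "x \<in> T" using up_closed[of d c] that by (auto simp: add.commute)
  qed
  moreover have "Poly_Mapping.keys (a + b) \<subseteq> T"
    if "Poly_Mapping.keys a \<subseteq> T" "Poly_Mapping.keys b \<subseteq> T" for a b :: "('v, 'k) mpoly"
    using that keys_add[of a b] by blast
  ultimately show ?thesis
    unfolding is_ideal_def monomial_span_def by auto
qed

lemma monomial_span_subset:
  assumes I: "is_ideal I" and monoms: "\<And>m. m \<in> T \<Longrightarrow> (monom m :: ('v, 'k::comm_ring_1) mpoly) \<in> I"
  shows "monomial_span T \<subseteq> I"
proof
  fix p :: "('v, 'k) mpoly" assume "p \<in> monomial_span T"
  then have "Poly_Mapping.single m (Poly_Mapping.lookup p m) \<in> I" if "m \<in> Poly_Mapping.keys p" for m
    using ideal_mult_left[OF I monoms, of m "Poly_Mapping.single 0 (Poly_Mapping.lookup p m)"] that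
    by (auto simp: monomial_span_def const_mult_monom)
  then have "(\<Sum>m\<in>Poly_Mapping.keys p. Poly_Mapping.single m (Poly_Mapping.lookup p m)) \<in> I"
    by (rule ideal_sum[OF I])
  then show "p \<in> I" using poly_eq_sum_terms[of p] by simp
qed

definition deg_on :: "'v set \<Rightarrow> ('v \<Rightarrow>\<^sub>0 nat) \<Rightarrow> nat" where
  "deg_on S m = (\<Sum>v\<in>S. Poly_Mapping.lookup m v)"

text \<open>\<open>deg_ideal S k\<close> is \<open>P(S)\<^sup>k\<close>.\<close>
definition deg_ideal :: "'v set \<Rightarrow> nat \<Rightarrow> ('v, 'k::comm_ring_1) mpoly set" where
  "deg_ideal S k = monomial_span {m. k \<le> deg_on S m}"

lemma deg_on_add: "deg_on S (a + b) = deg_on S a + deg_on S b"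
  by (simp add: deg_on_def lookup_add sum.distrib)

lemma deg_on_single: "deg_on (S :: 'v::finite set) (Poly_Mapping.single v 1) = (if v \<in> S then 1 else 0)"
  by (simp add: deg_on_def lookup_single when_def)

lemma deg_on_mono: "A \<subseteq> (B :: 'v::finite set) \<Longrightarrow> deg_on A m \<le> deg_on B m"
  unfolding deg_on_def by (rule sum_mono2) auto

lemma is_ideal_deg_ideal: "is_ideal (deg_ideal S k)"
  unfolding deg_ideal_def by (rule is_ideal_monomial_span) (simp add: deg_on_add)

lemma deg_ideal_0 [simp]: "deg_ideal S 0 = UNIV"
  by (auto simp: deg_ideal_def monomial_span_def)

lemma zero_in_deg_ideal: "0 \<in> deg_ideal S k"
  by (simp add: deg_ideal_def monomial_span_def)

lemma not_in_deg_ideal_iff: "p \<notin> deg_ideal S k \<longleftrightarrow> (\<exists>m\<in>Poly_Mapping.keys p. deg_on S m < k)"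
  by (auto simp: deg_ideal_def monomial_span_def not_le)

lemma monom_in_deg_ideal_iff: "(monom m :: ('v, 'k::comm_ring_1) mpoly) \<in> deg_ideal S k \<longleftrightarrow> k \<le> deg_on S m"
  by (simp add: deg_ideal_def monomial_span_def)

lemma var_in_deg_ideal_iff: "(var v :: ('v::finite, 'k::comm_ring_1) mpoly) \<in> deg_ideal S 1 \<longleftrightarrow> v \<in> S"
  using deg_on_single[of S v] by (simp add: var_eq_monom monom_in_deg_ideal_iff)

lemma deg_ideal_mult:
  assumes "p \<in> deg_ideal S i" "q \<in> deg_ideal S j" shows "p * q \<in> deg_ideal S (i + j)"
proof -
  have "i + j \<le> deg_on S c" if c: "c \<in> Poly_Mapping.keys (p * q)" for c
  proof -
    obtain a b where "a \<in> Poly_Mapping.keys p" "b \<in> Poly_Mapping.keys q" "c = a + b"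
      using c keys_mult[of p q] by blast
    with assms show ?thesis
      by (auto simp: deg_ideal_def monomial_span_def deg_on_add intro: add_mono)
  qed
  then show ?thesis by (auto simp: deg_ideal_def monomial_span_def)
qed

lemma deg_ideal_prod:
  "(\<And>i. i \<in> A \<Longrightarrow> f i \<in> deg_ideal S (n i)) \<Longrightarrow> (\<Prod>i\<in>A. f i) \<in> deg_ideal S (\<Sum>i\<in>A. n i)"
proof (induction A rule: infinite_finite_induct)
  case (insert a A)
  then have "f a * (\<Prod>i\<in>A. f i) \<in> deg_ideal S (n a + (\<Sum>i\<in>A. n i))"
    by (intro deg_ideal_mult) auto
  with insert show ?case by simp
qed simp_all

lemma deg_ideal_mono: "A \<subseteq> (B :: 'v::finite set) \<Longrightarrow> deg_ideal A k \<subseteq> deg_ideal B k"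
  unfolding deg_ideal_def monomial_span_def using deg_on_mono le_trans by blast

lemma deg_ideal_one_subset:
  fixes Q :: "('v::finite, 'k::comm_ring_1) mpoly set"
  assumes Q: "is_ideal Q" and vars: "\<And>v. v \<in> S \<Longrightarrow> var v \<in> Q"
  shows "deg_ideal S 1 \<subseteq> Q"
  unfolding deg_ideal_def
proof (rule monomial_span_subset[OF Q])
  fix m assume "m \<in> {m. 1 \<le> deg_on S m}"
  then have "deg_on S m \<noteq> 0" by simp
  then have "(\<Sum>v\<in>S. Poly_Mapping.lookup m v) \<noteq> 0"
    unfolding deg_on_def .
  then obtain v where v: "v \<in> S" "Poly_Mapping.lookup m v \<noteq> 0"
    by (rule sum.not_neutral_contains_not_neutral)
  have "monom m = monom (m - Poly_Mapping.single v 1) * (var v :: ('v, 'k) mpoly)"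
    unfolding var_eq_monom by (rule monom_eq_mult_monom_diff) (use v in \<open>auto simp: lookup_single when_def\<close>)
  then show "monom m \<in> Q" using ideal_mult_left[OF Q vars[OF v(1)]] by simp
qed

definition set_exponent :: "'v set \<Rightarrow> ('v \<Rightarrow>\<^sub>0 nat)" where
  "set_exponent S = (\<Sum>i\<in>S. Poly_Mapping.single i 1)"

lemma lookup_set_exponent:
  "Poly_Mapping.lookup (set_exponent (S :: 'v::finite set)) u = (if u \<in> S then 1 else 0)"
  by (simp add: set_exponent_def lookup_sum lookup_single when_def)

lemma prod_var_eq_monom:
  "finite S \<Longrightarrow> (\<Prod>i\<in>S. var i :: ('v, 'k::comm_ring_1) mpoly) = monom (set_exponent S)"
  by (induction S rule: finite_induct) (simp_all add: set_exponent_def monom_zero var_eq_monom monom_mult)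

lemma deg_on_set_exponent: "deg_on T (set_exponent (S :: 'v::finite set)) = card (S \<inter> T)"
proof -
  have "deg_on T (set_exponent S) = (\<Sum>v\<in>T. if v \<in> S then 1 else 0)"
    by (simp add: deg_on_def lookup_set_exponent)
  also have "\<dots> = card (S \<inter> T)"
    by (simp add: sum.If_cases Int_commute)
  finally show ?thesis .
qed

section \<open>Terms of lowest degree in a product\<close>

lemma lookup_mult_keys:
  "Poly_Mapping.lookup (f * g) c =
    (\<Sum>a\<in>Poly_Mapping.keys f. \<Sum>b\<in>Poly_Mapping.keys g.
        (Poly_Mapping.lookup f a * Poly_Mapping.lookup g b when c = a + b))"
proof -
  have inner: "(\<Sum>q. Poly_Mapping.lookup g q when c = l + q)
      = (\<Sum>b\<in>Poly_Mapping.keys g. Poly_Mapping.lookup g b when c = l + b)" for l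
    by (rule Sum_any.expand_superset) (auto simp: in_keys_iff)
  have "Poly_Mapping.lookup (f * g) c
     = (\<Sum>l. Poly_Mapping.lookup f l * (\<Sum>b\<in>Poly_Mapping.keys g. Poly_Mapping.lookup g b when c = l + b))"
    by (simp add: lookup_mult inner)
  also have "\<dots> = (\<Sum>a\<in>Poly_Mapping.keys f.
      Poly_Mapping.lookup f a * (\<Sum>b\<in>Poly_Mapping.keys g. Poly_Mapping.lookup g b when c = a + b))"
    by (rule Sum_any.expand_superset) (auto simp: in_keys_iff)
  finally show ?thesis
    by (simp add: sum_distrib_left mult_when)
qed

lemma sum_in_keys_mult_if_unique:
  fixes f g :: "'m::monoid_add \<Rightarrow>\<^sub>0 'k::{comm_semiring_0, semiring_no_zero_divisors}"
  assumes a0: "a0 \<in> Poly_Mapping.keys f" and b0: "b0 \<in> Poly_Mapping.keys g"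
    and unique: "\<And>a b. a \<in> Poly_Mapping.keys f \<Longrightarrow> b \<in> Poly_Mapping.keys g \<Longrightarrow>
                   a + b = a0 + b0 \<Longrightarrow> a = a0 \<and> b = b0"
  shows "a0 + b0 \<in> Poly_Mapping.keys (f * g)"
proof -
  have "Poly_Mapping.lookup (f * g) (a0 + b0) =
      (\<Sum>a\<in>Poly_Mapping.keys f. \<Sum>b\<in>Poly_Mapping.keys g.
        if a = a0 \<and> b = b0 then Poly_Mapping.lookup f a0 * Poly_Mapping.lookup g b0 else 0)"
    unfolding lookup_mult_keys
  proof (intro sum.cong refl)
    fix a b assume "a \<in> Poly_Mapping.keys f" "b \<in> Poly_Mapping.keys g"
    then have "a0 + b0 = a + b \<longleftrightarrow> a = a0 \<and> b = b0"
      using unique by metis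
    then show "(Poly_Mapping.lookup f a * Poly_Mapping.lookup g b when a0 + b0 = a + b) =
        (if a = a0 \<and> b = b0 then Poly_Mapping.lookup f a0 * Poly_Mapping.lookup g b0 else 0)"
      by (auto simp: when_def)
  qed
  also have "\<dots> = Poly_Mapping.lookup f a0 * Poly_Mapping.lookup g b0"
  proof -
    have "(\<Sum>b\<in>Poly_Mapping.keys g.
        if a = a0 \<and> b = b0 then Poly_Mapping.lookup f a0 * Poly_Mapping.lookup g b0 else 0)
      = (if a = a0 then Poly_Mapping.lookup f a0 * Poly_Mapping.lookup g b0 else 0)" for a
      using b0 by (cases "a = a0") (simp_all add: sum.delta')
    then show ?thesis using a0 by (simp add: sum.delta')
  qed
  also have "\<dots> \<noteq> 0"
    using a0 b0 by (simp add: in_keys_iff)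
  finally show ?thesis by (simp add: in_keys_iff)
qed

lemma exists_unique_min_weight_sum:
  fixes w :: "'m::cancel_comm_monoid_add \<Rightarrow> nat" and \<tau> :: "'m \<Rightarrow> 'o::linordered_cancel_ab_semigroup_add"
  assumes w_add: "\<And>a b. w (a + b) = w a + w b"
    and \<tau>_add: "\<And>a b. \<tau> (a + b) = \<tau> a + \<tau> b" and "inj \<tau>"
    and A: "finite A" "A \<noteq> {}" and B: "finite B" "B \<noteq> {}"
  shows "\<exists>a0\<in>A. \<exists>b0\<in>B. w a0 = Min (w ` A) \<and> w b0 = Min (w ` B) \<and>
           (\<forall>a\<in>A. \<forall>b\<in>B. a + b = a0 + b0 \<longrightarrow> a = a0 \<and> b = b0)"
proof -
  define F where "F = {a\<in>A. w a = Min (w ` A)}"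
  define G where "G = {b\<in>B. w b = Min (w ` B)}"
  have "Min (w ` A) \<in> w ` A" "Min (w ` B) \<in> w ` B"
    using A B by simp_all
  then have "F \<noteq> {}" "G \<noteq> {}"
    unfolding F_def G_def by force+
  moreover have "finite F" "finite G"
    using A B by (simp_all add: F_def G_def)
  ultimately have "Max (\<tau> ` F) \<in> \<tau> ` F" "Max (\<tau> ` G) \<in> \<tau> ` G"
    by simp_all
  then obtain a0 b0 where a0: "a0 \<in> F" "\<tau> a0 = Max (\<tau> ` F)" and b0: "b0 \<in> G" "\<tau> b0 = Max (\<tau> ` G)"
    by force
  have unique: "a = a0 \<and> b = b0" if ab: "a \<in> A" "b \<in> B" "a + b = a0 + b0" for a b
  proof -
    have "w a + w b = w a0 + w b0" using ab(3) w_add[of a b] w_add[of a0 b0] by simp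
    moreover have "w a0 \<le> w a" "w b0 \<le> w b"
      using a0 b0 ab A B by (auto simp: F_def G_def)
    ultimately have "a \<in> F" "b \<in> G" using a0 b0 ab by (auto simp: F_def G_def)
    then have le: "\<tau> a \<le> \<tau> a0" "\<tau> b \<le> \<tau> b0"
      using a0 b0 \<open>finite F\<close> \<open>finite G\<close> by simp_all
    have sum_eq: "\<tau> a + \<tau> b = \<tau> a0 + \<tau> b0" using ab(3) \<tau>_add[of a b] \<tau>_add[of a0 b0] by simp
    have "\<not> \<tau> a < \<tau> a0"
    proof
      assume "\<tau> a < \<tau> a0"
      then have "\<tau> a + \<tau> b < \<tau> a0 + \<tau> b0" using le(2) by (rule add_less_le_mono)
      with sum_eq show False by simp
    qed
    with le(1) have "\<tau> a = \<tau> a0" by simp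
    then have "a = a0" using \<open>inj \<tau>\<close> by (simp add: inj_eq)
    with ab(3) show ?thesis by simp
  qed
  show ?thesis
    using a0(1) b0(1) unique unfolding F_def G_def by blast
qed

lemma exists_additive_embedding:
  "\<exists>\<tau> :: ('v::finite \<Rightarrow>\<^sub>0 nat) \<Rightarrow> (nat \<Rightarrow>\<^sub>0 nat). inj \<tau> \<and> (\<forall>a b. \<tau> (a + b) = \<tau> a + \<tau> b)"
proof -
  obtain \<iota> :: "'v \<Rightarrow> nat" where \<iota>: "inj \<iota>"
    using finite_imp_inj_to_nat_seg[of "UNIV :: 'v set"] by auto
  define \<tau> :: "('v \<Rightarrow>\<^sub>0 nat) \<Rightarrow> (nat \<Rightarrow>\<^sub>0 nat)" where "\<tau> m = (\<Sum>v\<in>UNIV. Poly_Mapping.single (\<iota> v) (Poly_Mapping.lookup m v))" for m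
  have lookup_\<tau>: "Poly_Mapping.lookup (\<tau> m) (\<iota> v) = Poly_Mapping.lookup m v" for m v
    using \<iota> by (simp add: \<tau>_def lookup_sum lookup_single when_def inj_eq)
  have "inj \<tau>"
  proof (rule injI)
    fix a b assume "\<tau> a = \<tau> b"
    then show "a = b" by (metis lookup_\<tau> poly_mapping_eqI)
  qed
  moreover have "\<tau> (a + b) = \<tau> a + \<tau> b" for a b
    by (simp add: \<tau>_def lookup_add single_add sum.distrib)
  ultimately show ?thesis by (intro exI[of _ \<tau>]) simp
qed

lemma lowest_deg_on_in_keys_mult:
  fixes f g :: "('v::finite, 'k::field) mpoly"
  assumes "f \<noteq> 0" and "g \<noteq> 0"
  shows "\<exists>c\<in>Poly_Mapping.keys (f * g).
           deg_on S c = Min (deg_on S ` Poly_Mapping.keys f) + Min (deg_on S ` Poly_Mapping.keys g)"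
proof -
  obtain \<tau> :: "('v \<Rightarrow>\<^sub>0 nat) \<Rightarrow> (nat \<Rightarrow>\<^sub>0 nat)" where "inj \<tau>" "\<And>a b. \<tau> (a + b) = \<tau> a + \<tau> b"
    using exists_additive_embedding by blast
  then obtain a0 b0 where a0: "a0 \<in> Poly_Mapping.keys f" "deg_on S a0 = Min (deg_on S ` Poly_Mapping.keys f)"
    and b0: "b0 \<in> Poly_Mapping.keys g" "deg_on S b0 = Min (deg_on S ` Poly_Mapping.keys g)"
    and unique: "\<And>a b. a \<in> Poly_Mapping.keys f \<Longrightarrow> b \<in> Poly_Mapping.keys g \<Longrightarrow>
                   a + b = a0 + b0 \<Longrightarrow> a = a0 \<and> b = b0"
    using exists_unique_min_weight_sum[of "deg_on S" \<tau> "Poly_Mapping.keys f" "Poly_Mapping.keys g"]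
      assms deg_on_add by (metis finite_keys keys_eq_empty)
  have "a0 + b0 \<in> Poly_Mapping.keys (f * g)"
    using a0(1) b0(1) unique by (rule sum_in_keys_mult_if_unique)
  moreover have "deg_on S (a0 + b0) = Min (deg_on S ` Poly_Mapping.keys f) + Min (deg_on S ` Poly_Mapping.keys g)"
    using a0(2) b0(2) by (simp add: deg_on_add)
  ultimately show ?thesis by blast
qed

lemma deg_ideal_mult_notin:
  fixes f g :: "('v::finite, 'k::field) mpoly"
  assumes f: "f \<notin> deg_ideal S k" and g: "g \<notin> deg_ideal S 1"
  shows "g * f \<notin> deg_ideal S k"
proof -
  have "f \<noteq> 0" "g \<noteq> 0" using f g zero_in_deg_ideal by auto
  then obtain c where c: "c \<in> Poly_Mapping.keys (g * f)"
    "deg_on S c = Min (deg_on S ` Poly_Mapping.keys g) + Min (deg_on S ` Poly_Mapping.keys f)"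
    using lowest_deg_on_in_keys_mult by blast
  obtain mf where mf: "mf \<in> Poly_Mapping.keys f" "deg_on S mf < k"
    using f not_in_deg_ideal_iff by blast
  obtain mg where mg: "mg \<in> Poly_Mapping.keys g" "deg_on S mg = 0"
    using g not_in_deg_ideal_iff by blast
  have "Min (deg_on S ` Poly_Mapping.keys f) \<le> deg_on S mf"
    "Min (deg_on S ` Poly_Mapping.keys g) \<le> deg_on S mg"
    using mf(1) mg(1) by (auto intro: Min_le)
  then have "deg_on S c < k"
    using c(2) mf(2) mg(2) by linarith
  with c(1) show ?thesis using not_in_deg_ideal_iff by blast
qed

lemma prime_deg_ideal: "prime_ideal (deg_ideal S 1 :: ('v::finite, 'k::field) mpoly set)"
  unfolding prime_ideal_def
proof (intro conjI allI impI)
  show "is_ideal (deg_ideal S 1 :: ('v, 'k) mpoly set)"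
    by (rule is_ideal_deg_ideal)
  have "(1 :: ('v, 'k) mpoly) \<notin> deg_ideal S 1"
    by (simp add: deg_ideal_def monomial_span_def deg_on_def)
  then show "deg_ideal S 1 \<noteq> (UNIV :: ('v, 'k) mpoly set)" by auto
  fix a b :: "('v, 'k) mpoly"
  assume "a * b \<in> deg_ideal S 1"
  then show "a \<in> deg_ideal S 1 \<or> b \<in> deg_ideal S 1"
    using deg_ideal_mult_notin[of b S 1 a] by auto
qed

section \<open>Associated primes of symbolic powers of cover ideals\<close>

text \<open>The \<open>k\<close>-th symbolic power of the cover ideal of the hypergraph with edges \<open>N i\<close>.\<close>
definition cover_ideal :: "('i \<Rightarrow> 'v set) \<Rightarrow> nat \<Rightarrow> ('v, 'k::comm_ring_1) mpoly set" where
  "cover_ideal N k = (\<Inter>i. deg_ideal (N i) k)"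

lemma colon_cover_ideal_subset:
  fixes f :: "('v::finite, 'k::field) mpoly"
  assumes "f \<notin> deg_ideal (N i) k"
  shows "{g. g * f \<in> cover_ideal N k} \<subseteq> deg_ideal (N i) 1"
  using deg_ideal_mult_notin[OF assms] by (auto simp: cover_ideal_def)

lemma prime_colon_cover_ideal_contains:
  fixes N :: "'i::finite \<Rightarrow> 'v::finite set" and f :: "('v, 'k::field) mpoly"
  assumes Q: "prime_ideal Q" and Q_eq: "Q = {g. g * f \<in> cover_ideal N k}"
  shows "\<exists>i. f \<notin> deg_ideal (N i) k \<and> deg_ideal (N i) 1 \<subseteq> Q"
proof (rule ccontr)
  define J where "J = {i. f \<notin> deg_ideal (N i) k}"
  assume "\<not> ?thesis"
  then have "\<forall>i\<in>J. \<exists>u\<in>N i. var u \<notin> Q"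
    using deg_ideal_one_subset[of Q] Q unfolding J_def prime_ideal_def by blast
  then obtain u where u: "\<And>i. i \<in> J \<Longrightarrow> u i \<in> N i \<and> var (u i) \<notin> Q" by metis
  define h where "h = (\<Prod>i\<in>J. var (u i) ^ k :: ('v, 'k) mpoly)"
  have "h \<notin> Q"
    unfolding h_def using u prime_ideal_power_notin[OF Q] by (intro prime_ideal_prod_notin[OF Q]) blast
  moreover have "h * f \<in> deg_ideal (N i) k" for i
  proof (cases "i \<in> J")
    case True
    have "var (u i) ^ k \<in> deg_ideal (N i) (\<Sum>j<k. 1)"
      using u[OF True] var_in_deg_ideal_iff deg_ideal_prod[of "{..<k}" "\<lambda>_. var (u i)" "N i" "\<lambda>_. 1"]
      by auto
    then have "var (u i) ^ k * (\<Prod>j\<in>J - {i}. var (u j) ^ k) \<in> deg_ideal (N i) k"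
      by (intro ideal_mult_right[OF is_ideal_deg_ideal]) simp
    then have "h \<in> deg_ideal (N i) k"
      using True by (simp add: h_def prod.remove)
    then show ?thesis by (rule ideal_mult_right[OF is_ideal_deg_ideal])
  next
    case False
    then show ?thesis by (simp add: J_def ideal_mult_left[OF is_ideal_deg_ideal])
  qed
  ultimately show False
    using Q_eq by (auto simp: cover_ideal_def)
qed

lemma Ass_cover_ideal:
  fixes N :: "'i::finite \<Rightarrow> 'v::finite set"
  assumes "Q \<in> Ass (cover_ideal N k :: ('v, 'k::field) mpoly set)"
  shows "\<exists>i. Q = deg_ideal (N i) 1 \<and> (\<forall>j. N j \<subseteq> N i \<longrightarrow> N i \<subseteq> N j)"
proof -
  obtain f :: "('v, 'k) mpoly" where Q: "prime_ideal Q" and Q_eq: "Q = {g. g * f \<in> cover_ideal N k}"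
    using assms unfolding Ass_def by blast
  obtain i where i: "f \<notin> deg_ideal (N i) k" and "deg_ideal (N i) 1 \<subseteq> Q"
    using prime_colon_cover_ideal_contains[OF Q Q_eq] by blast
  then have Q_i: "Q = deg_ideal (N i) 1"
    using colon_cover_ideal_subset[of f N i k] i Q_eq by blast
  have "N i \<subseteq> N j" if "N j \<subseteq> N i" for j
  proof -
    have "f \<notin> deg_ideal (N j) k"
      using i deg_ideal_mono[OF that] by blast
    then have "(deg_ideal (N i) 1 :: ('v, 'k) mpoly set) \<subseteq> deg_ideal (N j) 1"
      using colon_cover_ideal_subset[of f N j k] Q_eq Q_i by blast
    then show ?thesis
      using var_in_deg_ideal_iff[where 'k = 'k] by blast
  qed
  with Q_i show ?thesis by blast
qed

lemma minimal_prime_in_Ass_cover_ideal: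
  fixes N :: "'i \<Rightarrow> 'v::finite set"
  assumes minimal: "\<And>j. N j \<subseteq> N i \<Longrightarrow> N i \<subseteq> N j"
  shows "(deg_ideal (N i) 1 :: ('v, 'k::field) mpoly set) \<in> Ass (cover_ideal N 1)"
proof -
  define f :: "('v, 'k) mpoly" where "f = monom (set_exponent (- N i))"
  have f_notin: "f \<notin> deg_ideal (N i) 1"
    by (simp add: f_def monom_in_deg_ideal_iff deg_on_set_exponent)
  have f_in: "f \<in> deg_ideal (N j) 1" if "N j \<noteq> N i" for j
  proof -
    have "- N i \<inter> N j \<noteq> {}" using minimal[of j] that by blast
    then show ?thesis
      by (simp add: f_def monom_in_deg_ideal_iff deg_on_set_exponent Suc_le_eq card_gt_0_iff)
  qed
  have "(deg_ideal (N i) 1 :: ('v, 'k) mpoly set) = {g. g * f \<in> cover_ideal N 1}"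
  proof (intro set_eqI iffI)
    fix g :: "('v, 'k) mpoly" assume "g \<in> deg_ideal (N i) 1"
    then have "g * f \<in> deg_ideal (N j) 1" for j
      using f_in[of j] by (cases "N j = N i")
        (auto intro: ideal_mult_left[OF is_ideal_deg_ideal] ideal_mult_right[OF is_ideal_deg_ideal])
    then show "g \<in> {g. g * f \<in> cover_ideal N 1}" by (simp add: cover_ideal_def)
  qed (use colon_cover_ideal_subset[of f N i 1] f_notin in blast)
  then show ?thesis
    using prime_deg_ideal unfolding Ass_def by blast
qed

lemma Ass_cover_ideal_subset:
  fixes N :: "'i::finite \<Rightarrow> 'v::finite set"
  shows "Ass (cover_ideal N k :: ('v, 'k::field) mpoly set) \<subseteq> Ass (cover_ideal N 1)"
proof
  fix Q assume "Q \<in> Ass (cover_ideal N k :: ('v, 'k) mpoly set)"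
  then obtain i where "Q = deg_ideal (N i) 1" and "\<forall>j. N j \<subseteq> N i \<longrightarrow> N i \<subseteq> N j"
    using Ass_cover_ideal by blast
  then show "Q \<in> Ass (cover_ideal N 1)"
    using minimal_prime_in_Ass_cover_ideal[of N i] by simp
qed

section \<open>Leaves of forests\<close>

definition path_in :: "('v \<Rightarrow> 'v \<Rightarrow> bool) \<Rightarrow> 'v set \<Rightarrow> 'v list \<Rightarrow> bool" where
  "path_in E W xs \<longleftrightarrow> xs \<noteq> [] \<and> distinct xs \<and> set xs \<subseteq> W \<and>
     (\<forall>i. Suc i < length xs \<longrightarrow> E (xs ! i) (xs ! Suc i))"

lemma exists_longest_path:
  assumes "finite W" and "w \<in> W"
  shows "\<exists>xs. path_in E W xs \<and> (\<forall>ys. path_in E W ys \<longrightarrow> length ys \<le> length xs)"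
proof -
  have "path_in E W [w]" using assms(2) by (simp add: path_in_def)
  moreover have "length ys < card W + 1" if "path_in E W ys" for ys
    using that assms(1) card_mono[of W "set ys"] distinct_card[of ys] by (simp add: path_in_def)
  ultimately show ?thesis
    using ex_has_greatest_nat[of "path_in E W" "[w]" length "card W + 1"] by blast
qed

lemma neighbour_of_longest_path_head:
  assumes "simple_graph E" and xs: "path_in E W xs"
    and longest: "\<forall>ys. path_in E W ys \<longrightarrow> length ys \<le> length xs"
    and "u \<in> W" and "E (hd xs) u"
  shows "u \<in> set xs"
proof (rule ccontr)
  assume u: "u \<notin> set xs"
  have "path_in E W (u # xs)"
    unfolding path_in_def
  proof (intro conjI allI impI)
    fix i assume i: "Suc i < length (u # xs)"
    show "E ((u # xs) ! i) ((u # xs) ! Suc i)"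
    proof (cases i)
      case 0
      then show ?thesis
        using assms(1,5) xs by (auto simp: simple_graph_def path_in_def hd_conv_nth)
    next
      case (Suc j)
      then show ?thesis using i xs by (simp add: path_in_def)
    qed
  qed (use u xs \<open>u \<in> W\<close> in \<open>auto simp: path_in_def\<close>)
  then show False using longest by fastforce
qed

lemma path_head_adjacent_only_to_successor:
  assumes "simple_graph E" "acyclic_graph E" and xs: "path_in E W xs"
    and j: "j < length xs" and adj: "E (xs ! 0) (xs ! j)"
  shows "j = 1"
proof -
  have "j \<noteq> 0"
  proof
    assume "j = 0"
    with adj assms(1) show False by (simp add: simple_graph_def)
  qed
  moreover have "\<not> 2 \<le> j"
  proof
    assume "2 \<le> j"
    define cs where "cs = take (Suc j) xs"
    have "is_cycle E cs"
      unfolding is_cycle_def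
    proof (intro conjI allI impI)
      show "3 \<le> length cs" "distinct cs"
        using \<open>2 \<le> j\<close> j xs by (simp_all add: cs_def path_in_def)
      show "E (cs ! i) (cs ! Suc i)" if "Suc i < length cs" for i
        using that xs j by (simp add: cs_def path_in_def)
      have "cs \<noteq> []" "length cs = Suc j"
        using j by (auto simp: cs_def)
      then have "last cs = xs ! j" "hd cs = xs ! 0"
        by (simp_all add: last_conv_nth hd_conv_nth) (simp_all add: cs_def)
      then show "E (last cs) (hd cs)"
        using adj assms(1) by (simp add: simple_graph_def)
    qed
    then show False using assms(2) by (auto simp: acyclic_graph_def)
  qed
  ultimately show "j = 1" by simp
qed

lemma forest_has_leaf:
  assumes "simple_graph E" "acyclic_graph E" "finite W" "W \<noteq> {}"
  shows "\<exists>v\<in>W. \<forall>u\<in>W. \<forall>u'\<in>W. E v u \<longrightarrow> E v u' \<longrightarrow> u = u'"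
proof -
  obtain xs where xs: "path_in E W xs" and longest: "\<forall>ys. path_in E W ys \<longrightarrow> length ys \<le> length xs"
    using exists_longest_path[OF assms(3)] assms(4) by blast
  have "u = xs ! 1" if "u \<in> W" "E (hd xs) u" for u
  proof -
    have "u \<in> set xs"
      using neighbour_of_longest_path_head[OF assms(1) xs longest that] .
    then obtain j where "j < length xs" "u = xs ! j" by (auto simp: in_set_conv_nth)
    moreover have "hd xs = xs ! 0" using xs by (simp add: path_in_def hd_conv_nth)
    ultimately show ?thesis
      using path_head_adjacent_only_to_successor[OF assms(1,2) xs] that by auto
  qed
  moreover have "hd xs \<in> W" using xs by (auto simp: path_in_def)
  ultimately show ?thesis by metis
qed

section \<open>Colouring closed neighbourhoods in a forest\<close>

definition colour_sets :: "'v set \<Rightarrow> nat \<Rightarrow> ('v \<Rightarrow> nat) \<Rightarrow> ('v \<Rightarrow> nat set) \<Rightarrow> bool" where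
  "colour_sets W k b C \<longleftrightarrow> (\<forall>u\<in>W. C u \<subseteq> {..<k} \<and> card (C u) = b u)"

definition missing_colours ::
    "('v \<Rightarrow> 'v \<Rightarrow> bool) \<Rightarrow> 'v set \<Rightarrow> nat \<Rightarrow> ('v \<Rightarrow> nat set) \<Rightarrow> 'v \<Rightarrow> nat set" where
  "missing_colours E W k C v = {..<k} - (\<Union>u\<in>closed_nbhd E v \<inter> W. C u)"

text \<open>For \<open>e = 0\<close> every colour
  class is a dominating set.\<close>
definition nbhd_colouring ::
    "('v \<Rightarrow> 'v \<Rightarrow> bool) \<Rightarrow> 'v set \<Rightarrow> nat \<Rightarrow> ('v \<Rightarrow> nat) \<Rightarrow> ('v \<Rightarrow> nat) \<Rightarrow> ('v \<Rightarrow> nat set) \<Rightarrow> bool" where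
  "nbhd_colouring E W k b e C \<longleftrightarrow>
     colour_sets W k b C \<and> (\<forall>v\<in>W. card (missing_colours E W k C v) \<le> e v)"

definition colour_demand :: "('v \<Rightarrow> 'v \<Rightarrow> bool) \<Rightarrow> 'v set \<Rightarrow> nat \<Rightarrow> ('v \<Rightarrow> nat) \<Rightarrow> ('v \<Rightarrow> nat) \<Rightarrow> bool" where
  "colour_demand E W k b e \<longleftrightarrow> (\<forall>v\<in>W. k \<le> (\<Sum>u\<in>closed_nbhd E v \<inter> W. b u) + e v)"

lemma missing_colours_insert_other:
  assumes "v \<notin> closed_nbhd E w"
  shows "missing_colours E (insert v W) k (C(v := X)) w = missing_colours E W k C w"
proof -
  have "closed_nbhd E w \<inter> insert v W = closed_nbhd E w \<inter> W" using assms by blast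
  moreover have "(\<Union>u\<in>closed_nbhd E w \<inter> W. (C(v := X)) u) = (\<Union>u\<in>closed_nbhd E w \<inter> W. C u)"
    using assms by auto
  ultimately show ?thesis by (simp add: missing_colours_def)
qed

lemma nested_greedy_subset:
  assumes MA: "M \<subseteq> A" and AU: "A \<subseteq> U" and U: "finite U" and b: "b \<le> card U"
  shows "\<exists>X \<subseteq> U. card X = b \<and> card (M - X) \<le> card M - b \<and> card (A - X) \<le> card A - b"
proof -
  have A: "finite A" using finite_subset[OF AU U] .
  have M: "finite M" using finite_subset[OF MA A] .
  consider "b \<le> card M" | "card M < b" "b \<le> card A" | "card A < b" by linarith
  then show ?thesis
  proof cases
    case 1
    then obtain X where X: "X \<subseteq> M" "card X = b" "finite X" by (rule obtain_subset_with_card_n)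
    moreover have "X \<subseteq> A" using X(1) MA by blast
    ultimately have "card (M - X) = card M - b" "card (A - X) = card A - b"
      by (simp_all add: card_Diff_subset)
    moreover have "X \<subseteq> U" using \<open>X \<subseteq> A\<close> AU by blast
    ultimately show ?thesis using X(2) by auto
  next
    case 2
    have "b - card M \<le> card (A - M)" using 2 M MA by (simp add: card_Diff_subset)
    then obtain Y where Y: "Y \<subseteq> A - M" "card Y = b - card M" "finite Y" by (rule obtain_subset_with_card_n)
    have "card (M \<union> Y) = b" using Y M Y(3) 2 by (subst card_Un_disjoint) auto
    have "card (A - (M \<union> Y)) = card ((A - M) - Y)"
      by (rule arg_cong[of _ _ card]) blast
    also have "\<dots> = card (A - M) - card Y"
      using Y Y(3) by (simp add: card_Diff_subset)
    also have "\<dots> = card A - b"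
      using Y 2 M MA by (simp add: card_Diff_subset)
    finally have "card (A - (M \<union> Y)) = card A - b" .
    moreover have "M - (M \<union> Y) = {}" by blast
    moreover have "M \<union> Y \<subseteq> U" using MA AU Y(1) by blast
    ultimately show ?thesis
      using \<open>card (M \<union> Y) = b\<close> by (intro exI[of _ "M \<union> Y"]) (simp only: card.empty, simp)
  next
    case 3
    have "b - card A \<le> card (U - A)" using b card_Diff_subset[OF A AU] by simp
    then obtain Y where Y: "Y \<subseteq> U - A" "card Y = b - card A" "finite Y" by (rule obtain_subset_with_card_n)
    have "card (A \<union> Y) = b" using Y A Y(3) 3 by (subst card_Un_disjoint) auto
    moreover have "M - (A \<union> Y) = {}" "A - (A \<union> Y) = {}"
      using MA by blast+
    moreover have "A \<union> Y \<subseteq> U" using AU Y(1) by blast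
    ultimately show ?thesis
      by (intro exI[of _ "A \<union> Y"]) (simp only: card.empty, simp)
  qed
qed

lemma closed_nbhd_inter_insert_other:
  assumes "simple_graph E" and "w \<noteq> v" and "\<not> E v w"
  shows "closed_nbhd E w \<inter> insert v W = closed_nbhd E w \<inter> W"
  using assms by (auto simp: closed_nbhd_def simple_graph_def)

lemma colour_demand_remove_isolated:
  assumes "simple_graph E" and "v \<notin> W" and isolated: "\<forall>u\<in>W. \<not> E v u"
    and demand: "colour_demand E (insert v W) k b e"
  shows "colour_demand E W k b e" and "k \<le> b v + e v"
proof -
  have "closed_nbhd E v \<inter> insert v W = {v}"
    unfolding closed_nbhd_def using isolated by blast
  moreover have "k \<le> (\<Sum>u\<in>closed_nbhd E v \<inter> insert v W. b u) + e v"
    using demand unfolding colour_demand_def by blast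
  ultimately show "k \<le> b v + e v" by simp
  show "colour_demand E W k b e"
    unfolding colour_demand_def
  proof
    fix w assume "w \<in> W"
    then have "closed_nbhd E w \<inter> insert v W = closed_nbhd E w \<inter> W"
      using assms(1,2) isolated by (intro closed_nbhd_inter_insert_other) auto
    moreover have "k \<le> (\<Sum>u\<in>closed_nbhd E w \<inter> insert v W. b u) + e w"
      using demand \<open>w \<in> W\<close> unfolding colour_demand_def by blast
    ultimately show "k \<le> (\<Sum>u\<in>closed_nbhd E w \<inter> W. b u) + e w" by simp
  qed
qed

lemma colour_demand_remove_pendant:
  assumes "simple_graph E" and "v \<notin> W" and "p \<in> W" and "E v p" and pendant: "\<forall>u\<in>W. E v u \<longrightarrow> u = p"
    and demand: "colour_demand E (insert v W) k b e" and "finite W"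
  shows "colour_demand E W k b (e(p := e p + b v))" and "k \<le> b v + b p + e v"
proof -
  have "p \<noteq> v" using assms(2,3) by blast
  have "closed_nbhd E v \<inter> insert v W = {v, p}"
    unfolding closed_nbhd_def using assms(3,4) pendant by blast
  moreover have "k \<le> (\<Sum>u\<in>closed_nbhd E v \<inter> insert v W. b u) + e v"
    using demand unfolding colour_demand_def by blast
  ultimately show "k \<le> b v + b p + e v"
    using \<open>p \<noteq> v\<close> by simp
  show "colour_demand E W k b (e(p := e p + b v))"
    unfolding colour_demand_def
  proof
    fix w assume "w \<in> W"
    show "k \<le> (\<Sum>u\<in>closed_nbhd E w \<inter> W. b u) + (e(p := e p + b v)) w"
    proof (cases "w = p")
      case True
      have "closed_nbhd E p \<inter> insert v W = insert v (closed_nbhd E p \<inter> W)"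
        using assms(1,4) by (auto simp: closed_nbhd_def simple_graph_def)
      then have "(\<Sum>u\<in>closed_nbhd E p \<inter> insert v W. b u) = b v + (\<Sum>u\<in>closed_nbhd E p \<inter> W. b u)"
        using assms(2,7) by simp
      moreover have "k \<le> (\<Sum>u\<in>closed_nbhd E p \<inter> insert v W. b u) + e p"
        using demand assms(3) unfolding colour_demand_def by blast
      ultimately show ?thesis using True by simp
    next
      case False
      then have "closed_nbhd E w \<inter> insert v W = closed_nbhd E w \<inter> W"
        using assms(1,2) pendant \<open>w \<in> W\<close> by (intro closed_nbhd_inter_insert_other) auto
      moreover have "k \<le> (\<Sum>u\<in>closed_nbhd E w \<inter> insert v W. b u) + e w"
        using demand \<open>w \<in> W\<close> unfolding colour_demand_def by blast
      ultimately show ?thesis using False by simp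
    qed
  qed
qed

lemma colour_sets_insert:
  "colour_sets W k b C \<Longrightarrow> X \<subseteq> {..<k} \<Longrightarrow> card X = b v \<Longrightarrow> colour_sets (insert v W) k b (C(v := X))"
  by (simp add: colour_sets_def)

lemma nbhd_colouring_add_isolated:
  assumes "simple_graph E" and "v \<notin> W" and isolated: "\<forall>u\<in>W. \<not> E v u"
    and C: "nbhd_colouring E W k b e C" and "b v \<le> k" and "k \<le> b v + e v"
  shows "\<exists>X. nbhd_colouring E (insert v W) k b e (C(v := X))"
proof -
  obtain X where X: "X \<subseteq> {..<k}" "card X = b v" "finite X"
    using obtain_subset_with_card_n[of "b v" "{..<k}"] assms(5) by auto
  have "card (missing_colours E (insert v W) k (C(v := X)) w) \<le> e w" if "w \<in> insert v W" for w
  proof (cases "w = v")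
    case True
    have "closed_nbhd E v \<inter> insert v W = {v}"
      unfolding closed_nbhd_def using isolated by blast
    then have "missing_colours E (insert v W) k (C(v := X)) w = {..<k} - X"
      using True by (simp add: missing_colours_def)
    then show ?thesis using X assms(6) True by (simp add: card_Diff_subset)
  next
    case False
    then have "v \<notin> closed_nbhd E w"
      using isolated that assms(1) by (auto simp: closed_nbhd_def simple_graph_def)
    then show ?thesis
      using C False that by (simp add: missing_colours_insert_other nbhd_colouring_def)
  qed
  with C X show ?thesis
    by (intro exI[of _ X]) (simp add: nbhd_colouring_def colour_sets_insert)
qed

lemma nbhd_colouring_add_pendant:
  assumes "simple_graph E" and "v \<notin> W" and "p \<in> W" and "E v p" and pendant: "\<forall>u\<in>W. E v u \<longrightarrow> u = p"
    and C: "nbhd_colouring E W k b (e(p := e p + b v)) C" and "b v \<le> k" and "k \<le> b v + b p + e v"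
  shows "\<exists>X. nbhd_colouring E (insert v W) k b e (C(v := X))"
proof -
  define M where "M = missing_colours E W k C p"
  define A where "A = {..<k} - C p"
  have "p \<in> closed_nbhd E p \<inter> W" using assms(3) by (simp add: closed_nbhd_def)
  then have "M \<subseteq> A" by (auto simp: M_def A_def missing_colours_def)
  moreover have "A \<subseteq> {..<k}" by (auto simp: A_def)
  ultimately obtain X where X: "X \<subseteq> {..<k}" "card X = b v"
    "card (M - X) \<le> card M - b v" "card (A - X) \<le> card A - b v"
    using nested_greedy_subset[of M A "{..<k}" "b v"] assms(7) by auto
  have "C p \<subseteq> {..<k}" "card (C p) = b p"
    using C assms(3) by (auto simp: nbhd_colouring_def colour_sets_def)
  then have card_A: "card A = k - b p"
    by (simp add: A_def card_Diff_subset finite_subset)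
  have "card (missing_colours E (insert v W) k (C(v := X)) w) \<le> e w" if "w \<in> insert v W" for w
  proof -
    consider "w = v" | "w = p" | "w \<noteq> v" "w \<noteq> p" by blast
    then show ?thesis
    proof cases
      case 1
      have "closed_nbhd E v \<inter> insert v W = {v, p}"
        unfolding closed_nbhd_def using assms(3,4) pendant by blast
      then have "missing_colours E (insert v W) k (C(v := X)) w = A - X"
        using 1 assms(2,3) by (auto simp: missing_colours_def A_def)
      then show ?thesis using X(4) card_A 1 assms(8) by simp
    next
      case 2
      have "closed_nbhd E p \<inter> insert v W = insert v (closed_nbhd E p \<inter> W)"
        using assms(1,4) by (auto simp: closed_nbhd_def simple_graph_def)
      then have "missing_colours E (insert v W) k (C(v := X)) w = M - X"
        using 2 assms(2) by (auto simp: missing_colours_def M_def)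
      moreover have "card M \<le> e p + b v"
        using C assms(3) by (auto simp: nbhd_colouring_def M_def)
      ultimately show ?thesis using X(3) 2 by simp
    next
      case 3
      then have "v \<notin> closed_nbhd E w"
        using pendant that assms(1) by (auto simp: closed_nbhd_def simple_graph_def)
      moreover have "card (missing_colours E W k C w) \<le> e w"
        using C 3 that unfolding nbhd_colouring_def by fastforce
      ultimately show ?thesis by (simp add: missing_colours_insert_other)
    qed
  qed
  with C X show ?thesis
    by (intro exI[of _ X]) (simp add: nbhd_colouring_def colour_sets_insert)
qed

lemma forest_nbhd_colouring:
  assumes "simple_graph E" "acyclic_graph E" and "finite W"
    and "\<forall>u\<in>W. b u \<le> k" and "colour_demand E W k b e"
  shows "\<exists>C. nbhd_colouring E W k b e C"
  using assms(3-)
proof (induction W arbitrary: e rule: finite_psubset_induct)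
  case (psubset W)
  show ?case
  proof (cases "W = {}")
    case True
    then show ?thesis by (simp add: nbhd_colouring_def colour_sets_def)
  next
    case False
    then obtain v where "v \<in> W" and leaf: "\<forall>u\<in>W. \<forall>u'\<in>W. E v u \<longrightarrow> E v u' \<longrightarrow> u = u'"
      using forest_has_leaf[OF assms(1,2) psubset.hyps(1)] by blast
    define W' where "W' = W - {v}"
    have W: "W = insert v W'" "v \<notin> W'" "W' \<subset> W" "finite W'"
      using \<open>v \<in> W\<close> psubset.hyps(1) by (auto simp: W'_def)
    have b: "\<forall>u\<in>W'. b u \<le> k" "b v \<le> k"
      using psubset.prems(1) W(1) by simp_all
    have demand: "colour_demand E (insert v W') k b e"
      using psubset.prems(2) W(1) by simp
    have "\<exists>X. \<exists>C. nbhd_colouring E (insert v W') k b e (C(v := X))"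
    proof (cases "\<exists>p\<in>W'. E v p")
      case False
      then have isolated: "\<forall>u\<in>W'. \<not> E v u" by blast
      note remove = colour_demand_remove_isolated[OF assms(1) W(2) isolated demand]
      obtain C where C: "nbhd_colouring E W' k b e C"
        using psubset.IH[OF W(3) b(1) remove(1)] by blast
      show ?thesis
        using nbhd_colouring_add_isolated[OF assms(1) W(2) isolated C b(2) remove(2)] by blast
    next
      case True
      then obtain p where p: "p \<in> W'" "E v p" by blast
      then have pendant: "\<forall>u\<in>W'. E v u \<longrightarrow> u = p"
        using leaf W(1) by blast
      note remove = colour_demand_remove_pendant[OF assms(1) W(2) p pendant demand W(4)]
      obtain C where C: "nbhd_colouring E W' k b (e(p := e p + b v)) C"
        using psubset.IH[OF W(3) b(1) remove(1)] by blast
      show ?thesis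
        using nbhd_colouring_add_pendant[OF assms(1) W(2) p pendant C b(2) remove(2)] by blast
    qed
    then show ?thesis using W(1) by blast
  qed
qed

lemma exists_minimal_dominating_subset:
  fixes D :: "'v::finite set"
  assumes "dominating_set E D"
  shows "\<exists>M\<subseteq>D. minimal_dominating_set E M"
  using assms
proof (induction "card D" arbitrary: D rule: less_induct)
  case less
  show ?case
  proof (cases "minimal_dominating_set E D")
    case False
    then obtain D' where D': "D' \<subset> D" "dominating_set E D'"
      using less.prems by (auto simp: minimal_dominating_set_def)
    then have "card D' < card D" by (simp add: psubset_card_mono)
    then obtain M where "M \<subseteq> D'" "minimal_dominating_set E M" using less.hyps D' by blast
    then show ?thesis using D' by blast
  qed blast
qed

lemma colour_class_dominating:
  assumes "nbhd_colouring E UNIV k b (\<lambda>_. 0) C" and "j < k"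
  shows "dominating_set E {u. j \<in> C u}"
  unfolding dominating_set_def
proof
  fix v
  have "card (missing_colours E UNIV k C v) = 0" "finite (missing_colours E UNIV k C v)"
    using assms(1) by (simp_all add: nbhd_colouring_def missing_colours_def)
  then have "missing_colours E UNIV k C v = {}" by simp
  then obtain u where "u \<in> closed_nbhd E v" "j \<in> C u"
    using assms(2) by (auto simp: missing_colours_def)
  then show "{u. j \<in> C u} \<inter> closed_nbhd E v \<noteq> {}" by blast
qed

lemma colour_demand_of_deg_on:
  fixes m :: "'v::finite \<Rightarrow>\<^sub>0 nat"
  assumes deg: "\<And>v. k \<le> deg_on (closed_nbhd E v) m"
  shows "colour_demand E UNIV k (\<lambda>u. min (Poly_Mapping.lookup m u) k) (\<lambda>_. 0)"
  unfolding colour_demand_def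
proof
  fix v :: 'v
  let ?b = "\<lambda>u. min (Poly_Mapping.lookup m u) k"
  show "k \<le> (\<Sum>u\<in>closed_nbhd E v \<inter> UNIV. ?b u) + 0"
  proof (cases "\<exists>u\<in>closed_nbhd E v. k \<le> Poly_Mapping.lookup m u")
    case True
    then obtain u where u: "u \<in> closed_nbhd E v" "k \<le> Poly_Mapping.lookup m u" by blast
    then have "?b u \<le> (\<Sum>u\<in>closed_nbhd E v. ?b u)"
      by (intro member_le_sum) auto
    with u show ?thesis by simp
  next
    case False
    then have "(\<Sum>u\<in>closed_nbhd E v. ?b u) = deg_on (closed_nbhd E v) m"
      unfolding deg_on_def by (intro sum.cong) auto
    with deg[of v] show ?thesis by simp
  qed
qed

lemma forest_dominating_decomposition:
  fixes E :: "'v::finite \<Rightarrow> 'v \<Rightarrow> bool" and m :: "'v \<Rightarrow>\<^sub>0 nat"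
  assumes "simple_graph E" "acyclic_graph E" and deg: "\<And>v. k \<le> deg_on (closed_nbhd E v) m"
  shows "\<exists>D. (\<forall>j<k. minimal_dominating_set E (D j)) \<and>
             (\<forall>u. card {j. j < k \<and> u \<in> D j} \<le> Poly_Mapping.lookup m u)"
proof -
  define b where "b = (\<lambda>u. min (Poly_Mapping.lookup m u) k)"
  have "colour_demand E UNIV k b (\<lambda>_. 0)"
    unfolding b_def by (rule colour_demand_of_deg_on[OF deg])
  moreover have "\<forall>u\<in>UNIV. b u \<le> k" by (simp add: b_def)
  ultimately obtain C where C: "nbhd_colouring E UNIV k b (\<lambda>_. 0) C"
    using forest_nbhd_colouring[OF assms(1,2) finite_UNIV] by blast
  have "\<forall>j. \<exists>M. j < k \<longrightarrow> M \<subseteq> {u. j \<in> C u} \<and> minimal_dominating_set E M"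
  proof
    fix j show "\<exists>M. j < k \<longrightarrow> M \<subseteq> {u. j \<in> C u} \<and> minimal_dominating_set E M"
      using exists_minimal_dominating_subset[OF colour_class_dominating[OF C]] by blast
  qed
  from choice[OF this] obtain D
    where D: "\<forall>j. j < k \<longrightarrow> D j \<subseteq> {u. j \<in> C u} \<and> minimal_dominating_set E (D j)"
    by blast
  have "card {j. j < k \<and> u \<in> D j} \<le> Poly_Mapping.lookup m u" for u
  proof -
    have "{j. j < k \<and> u \<in> D j} \<subseteq> C u" using D by blast
    moreover have "finite (C u)" "card (C u) = b u"
      using C finite_subset[of "C u" "{..<k}"] by (auto simp: nbhd_colouring_def colour_sets_def)
    ultimately have "card {j. j < k \<and> u \<in> D j} \<le> b u"
      using card_mono by fastforce
    then show ?thesis by (simp add: b_def)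
  qed
  with D show ?thesis by blast
qed

section \<open>Powers of the dominating ideal of a forest\<close>

lemma monom_sum: "monom (\<Sum>j<(k::nat). f j) = (\<Prod>j<k. monom (f j) :: ('v, 'k::comm_ring_1) mpoly)"
  by (induction k) (simp_all add: monom_zero flip: monom_mult)

lemma monom_set_exponent_in_dominating_ideal:
  fixes E :: "'v::finite \<Rightarrow> 'v \<Rightarrow> bool"
  assumes "minimal_dominating_set E S"
  shows "(monom (set_exponent S) :: ('v, 'k::field) mpoly) \<in> dominating_ideal E"
proof -
  have "(\<Prod>i\<in>S. var i :: ('v, 'k) mpoly) \<in> {\<Prod>i\<in>S. var i | S. minimal_dominating_set E S}"
    using assms by blast
  then have "(\<Prod>i\<in>S. var i :: ('v, 'k) mpoly) \<in> dominating_ideal E"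
    unfolding dominating_ideal_def by (rule subsetD[OF ideal_gen_subset])
  then show ?thesis by (simp add: prod_var_eq_monom)
qed

lemma dominating_ideal_subset_deg_ideal:
  fixes E :: "'v::finite \<Rightarrow> 'v \<Rightarrow> bool"
  shows "(dominating_ideal E :: ('v, 'k::field) mpoly set) \<subseteq> deg_ideal (closed_nbhd E v) 1"
  unfolding dominating_ideal_def
proof (rule ideal_gen_least[OF is_ideal_deg_ideal], clarify)
  fix S assume "minimal_dominating_set E S"
  then have "S \<inter> closed_nbhd E v \<noteq> {}"
    by (simp add: minimal_dominating_set_def dominating_set_def)
  then show "(\<Prod>i\<in>S. var i :: ('v, 'k) mpoly) \<in> deg_ideal (closed_nbhd E v) 1"
    by (simp add: prod_var_eq_monom monom_in_deg_ideal_iff deg_on_set_exponent Suc_le_eq card_gt_0_iff)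
qed

lemma ideal_pow_dominating_ideal_subset:
  fixes E :: "'v::finite \<Rightarrow> 'v \<Rightarrow> bool"
  shows "ideal_pow (dominating_ideal E :: ('v, 'k::field) mpoly set) k \<subseteq> cover_ideal (closed_nbhd E) k"
  unfolding cover_ideal_def
proof (intro INT_greatest ideal_pow_subset[OF is_ideal_deg_ideal])
  fix v and f :: "nat \<Rightarrow> ('v, 'k) mpoly"
  assume "\<forall>i<k. f i \<in> dominating_ideal E"
  then have "(\<Prod>i<k. f i) \<in> deg_ideal (closed_nbhd E v) (\<Sum>i<k. 1)"
    using dominating_ideal_subset_deg_ideal by (intro deg_ideal_prod) blast
  then show "(\<Prod>i<k. f i) \<in> deg_ideal (closed_nbhd E v) k" by simp
qed

lemma cover_ideal_eq_monomial_span: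
  "cover_ideal N k = monomial_span {m. \<forall>i. k \<le> deg_on (N i) m}"
  by (auto simp: cover_ideal_def deg_ideal_def monomial_span_def)

lemma forest_cover_ideal_subset_ideal_pow:
  fixes E :: "'v::finite \<Rightarrow> 'v \<Rightarrow> bool"
  assumes "simple_graph E" "acyclic_graph E"
  shows "cover_ideal (closed_nbhd E) k \<subseteq> ideal_pow (dominating_ideal E :: ('v, 'k::field) mpoly set) k"
  unfolding cover_ideal_eq_monomial_span
proof (rule monomial_span_subset[OF is_ideal_ideal_pow])
  fix m assume "m \<in> {m. \<forall>v. k \<le> deg_on (closed_nbhd E v) m}"
  then obtain D where D: "\<forall>j<k. minimal_dominating_set E (D j)"
    and count: "\<forall>u. card {j. j < k \<and> u \<in> D j} \<le> Poly_Mapping.lookup m u"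
    using forest_dominating_decomposition[OF assms] by blast
  define s where "s = (\<Sum>j<k. set_exponent (D j))"
  have "Poly_Mapping.lookup s u = card {j. j < k \<and> u \<in> D j}" for u
    by (simp add: s_def lookup_sum lookup_set_exponent sum.If_cases Int_def)
  then have "monom m = monom (m - s) * (monom s :: ('v, 'k) mpoly)"
    using count by (intro monom_eq_mult_monom_diff) simp
  moreover have "(monom s :: ('v, 'k) mpoly) \<in> ideal_pow (dominating_ideal E) k"
    unfolding s_def monom_sum
    using D by (intro prod_in_ideal_pow monom_set_exponent_in_dominating_ideal) blast
  ultimately show "(monom m :: ('v, 'k) mpoly) \<in> ideal_pow (dominating_ideal E) k"
    using ideal_mult_left[OF is_ideal_ideal_pow] by metis
qed

lemma forest_ideal_pow_dominating_ideal:
  fixes E :: "'v::finite \<Rightarrow> 'v \<Rightarrow> bool"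
  assumes "simple_graph E" "acyclic_graph E"
  shows "ideal_pow (dominating_ideal E :: ('v, 'k::field) mpoly set) k = cover_ideal (closed_nbhd E) k"
  using ideal_pow_dominating_ideal_subset forest_cover_ideal_subset_ideal_pow[OF assms] by blast

theorem corollary2p19:
  fixes E :: "'v::finite \<Rightarrow> 'v \<Rightarrow> bool"
  assumes "is_tree E"
  shows "normally_torsion_free (dominating_ideal E :: ('v, 'k::field) mpoly set)"
proof -
  have forest: "simple_graph E" "acyclic_graph E"
    using assms by (simp_all add: is_tree_def)
  have "dominating_ideal E = ideal_pow (dominating_ideal E :: ('v, 'k) mpoly set) 1"
    unfolding dominating_ideal_def by (rule ideal_pow_one[OF is_ideal_ideal_gen, symmetric])
  then have "Ass (ideal_pow (dominating_ideal E :: ('v, 'k) mpoly set) k) \<subseteq> Ass (dominating_ideal E)" for k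
    using Ass_cover_ideal_subset[of "closed_nbhd E" k] forest_ideal_pow_dominating_ideal[OF forest] by metis
  then show ?thesis
    by (simp add: normally_torsion_free_def)
qed

end
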